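(* Consider the grid and the operator $Q_{i,j}$ described in the context, fix a species index $l$ with valence $q^l\in\mathbb{R}$, a time step $\Delta t^{n+1}>0$, and a real grid function $\psi^{n+1}=(\psi^{n+1}_{i,j})$, and set $S^{l,n+1}_{i,j}=q^l\psi^{n+1}_{i,j}$. Suppose $c^{l,n}_{i,j}>0$ for all $1\le i\le N_x$, $1\le j\le N_y$, and that $c^{l,n+1}$ satisfies the backward Euler scheme $$h^x_ih^y_j\,\frac{c^{l,n+1}_{i,j}-c^{l,n}_{i,j}}{\Delta t^{n+1}}=Q_{i,j}(c^{l,n+1},S^{l,n+1})\qquad(1\le i\le N_x,\ 1\le j\le N_y).$$ Then $c^{l,n+1}_{i,j}>0$ for all $1\le i\le N_x$, $1\le j\le N_y$.
   Context: Grid on $\Omega=[a,b]\times[c,d]$: $a=x_{1/2}<x_{3/2}<\dots<x_{N_x+1/2}=b$, $c=y_{1/2}<\dots<y_{N_y+1/2}=d$; $x_i=(x_{i-1/2}+x_{i+1/2})/2$, $y_j=(y_{j-1/2}+y_{j+1/2})/2$; $h^x_i=x_{i+1/2}-x_{i-1/2}$, $h^y_j=y_{j+1/2}-y_{j-1/2}$; $h^x_{i+1/2}=x_{i+1}-x_i$ ($1\le i\le N_x-1$), $h^y_{j+1/2}=y_{j+1}-y_j$ ($1\le j\le N_y-1$). For grid functions $c,S$ define fluxes $\widehat g_{x,i+1/2,j}=\frac{c_{i+1,j}e^{S_{i+1,j}}-c_{i,j}e^{S_{i,j}}}{h^x_{i+1/2}}$ ($1\le i\le N_x-1$), $\widehat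 g_{y,i,j+1/2}=\frac{c_{i,j+1}e^{S_{i,j+1}}-c_{i,j}e^{S_{i,j}}}{h^y_{j+1/2}}$ ($1\le j\le N_y-1$), with zero-flux boundary values $\widehat g_{x,1/2,j}=\widehat g_{x,N_x+1/2,j}=\widehat g_{y,i,1/2}=\widehat g_{y,i,N_y+1/2}=0$; harmonic means $e^{-S_{i+1/2,j}}:=\frac{2e^{-S_{i+1,j}}e^{-S_{i,j}}}{e^{-S_{i+1,j}}+e^{-S_{i,j}}}$, $e^{-S_{i,j+1/2}}:=\frac{2e^{-S_{i,j+1}}e^{-S_{i,j}}}{e^{-S_{i,j+1}}+e^{-S_{i,j}}}$ (irrelevant at boundary half-indices, where fluxes vanish); and $$Q_{i,j}(c,S)=h^y_j\big(e^{-S_{i+1/2,j}}\widehat g_{x,i+1/2,j}-e^{-S_{i-1/2,j}}\widehat g_{x,i-1/2,j}\big)+h^x_i\big(e^{-S_{i,j+1/2}}\widehat g_{y,i,j+1/2}-e^{-S_{i,j-1/2}}\widehat g_{y,i,j-1/2}\big).$$ This is a discretization of the Nernst--Planck equation $\partial_tc^l=\nabla\cdot(e^{-q^l\psi}\nabla(c^le^{q^l\psi}))$ with zero-flux boundary conditions; in the full method $\psi^{n+1}$ is coupled to the concentrations through a discretized Poisson equation, here it is an arbitrary given grid function. *)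

theory Defs
  imports "HOL-Analysis.Analysis"
begin

text \<open>Grid on [a,b] x [c,d]: the cell faces are x_{k+1/2} = xf k (k = 0..Nx),
  y_{k+1/2} = yf k (k = 0..Ny); cells are indexed by 1 \<le> i \<le> Nx, 1 \<le> j \<le> Ny.
  Quantities living at half-index k+1/2 are indexed by k.\<close>

definition ctr :: "(nat \<Rightarrow> real) \<Rightarrow> nat \<Rightarrow> real" where
  "ctr f i = (f (i - 1) + f i) / 2"

definition cell_w :: "(nat \<Rightarrow> real) \<Rightarrow> nat \<Rightarrow> real" where
  "cell_w f i = f i - f (i - 1)"

text \<open>h_{i+1/2} = x_{i+1} - x_i, indexed by i.\<close>
definition dual_w :: "(nat \<Rightarrow> real) \<Rightarrow> nat \<Rightarrow> real" where
  "dual_w f i = ctr f (i + 1) - ctr f i"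

text \<open>Flux g_{x,i+1/2,j} indexed by i (0 \<le> i \<le> Nx); zero at the boundary.\<close>
definition flux_x :: "nat \<Rightarrow> (nat \<Rightarrow> real) \<Rightarrow> (nat \<Rightarrow> nat \<Rightarrow> real) \<Rightarrow> (nat \<Rightarrow> nat \<Rightarrow> real)
    \<Rightarrow> nat \<Rightarrow> nat \<Rightarrow> real" where
  "flux_x Nx xf c S i j =
     (if 1 \<le> i \<and> i < Nx
      then (c (i + 1) j * exp (S (i + 1) j) - c i j * exp (S i j)) / dual_w xf i
      else 0)"

definition flux_y :: "nat \<Rightarrow> (nat \<Rightarrow> real) \<Rightarrow> (nat \<Rightarrow> nat \<Rightarrow> real) \<Rightarrow> (nat \<Rightarrow> nat \<Rightarrow> real)
    \<Rightarrow> nat \<Rightarrow> nat \<Rightarrow> real" where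
  "flux_y Ny yf c S i j =
     (if 1 \<le> j \<and> j < Ny
      then (c i (j + 1) * exp (S i (j + 1)) - c i j * exp (S i j)) / dual_w yf j
      else 0)"

text \<open>Harmonic means e^{-S_{i+1/2,j}} (indexed by i) and e^{-S_{i,j+1/2}} (indexed by j).\<close>
definition hm_x :: "(nat \<Rightarrow> nat \<Rightarrow> real) \<Rightarrow> nat \<Rightarrow> nat \<Rightarrow> real" where
  "hm_x S i j = 2 * exp (- S (i + 1) j) * exp (- S i j) / (exp (- S (i + 1) j) + exp (- S i j))"

definition hm_y :: "(nat \<Rightarrow> nat \<Rightarrow> real) \<Rightarrow> nat \<Rightarrow> nat \<Rightarrow> real" where
  "hm_y S i j = 2 * exp (- S i (j + 1)) * exp (- S i j) / (exp (- S i (j + 1)) + exp (- S i j))"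

definition Qop :: "nat \<Rightarrow> nat \<Rightarrow> (nat \<Rightarrow> real) \<Rightarrow> (nat \<Rightarrow> real)
    \<Rightarrow> (nat \<Rightarrow> nat \<Rightarrow> real) \<Rightarrow> (nat \<Rightarrow> nat \<Rightarrow> real) \<Rightarrow> nat \<Rightarrow> nat \<Rightarrow> real" where
  "Qop Nx Ny xf yf c S i j =
     cell_w yf j * (hm_x S i j * flux_x Nx xf c S i j
                    - hm_x S (i - 1) j * flux_x Nx xf c S (i - 1) j)
   + cell_w xf i * (hm_y S i j * flux_y Ny yf c S i j
                    - hm_y S i (j - 1) * flux_y Ny yf c S i (j - 1))"

end

theory Submission
  imports Defs
begin

text \<open>A discrete minimum principle for the Slotboom variable u = c e^S. The fluxes are
  difference quotients of u over positive dual widths, weighted by positive harmonic means and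
  cell widths. So at a grid point where u is minimal the flux into the cell from every side is
  nonnegative, i.e. Q \<ge> 0, and the scheme gives c^{n+1} \<ge> c^n > 0 there. Since e^S > 0,
  the minimum of u, and with it every c^{n+1}_{i,j}, is positive.\<close>

lemma cell_w_pos:
  assumes "\<And>k. k < N \<Longrightarrow> f k < f (k + 1)" and "1 \<le> i" and "i \<le> N"
  shows "0 < cell_w f i"
  using assms(1)[of "i - 1"] assms(2,3) by (simp add: cell_w_def)

lemma dual_w_pos:
  assumes "\<And>k. k < N \<Longrightarrow> f k < f (k + 1)" and "i < N"
  shows "0 < dual_w f i"
proof -
  have "f (i - 1) \<le> f i" using assms(1)[of "i - 1"] assms(2) by (cases i) auto
  moreover have "f i < f (i + 1)" using assms by simp
  ultimately show ?thesis by (simp add: dual_w_def ctr_def)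
qed

lemma hm_x_pos: "0 < hm_x S i j"
  by (simp add: hm_x_def add_pos_pos)

lemma hm_y_pos: "0 < hm_y S i j"
  by (simp add: hm_y_def add_pos_pos)

lemma flux_x_nonneg:
  assumes "\<And>k. k < Nx \<Longrightarrow> xf k < xf (k + 1)"
    and "1 \<le> i \<Longrightarrow> i < Nx \<Longrightarrow> c i j * exp (S i j) \<le> c (i + 1) j * exp (S (i + 1) j)"
  shows "0 \<le> flux_x Nx xf c S i j"
  using assms dual_w_pos[where N = Nx and f = xf and i = i, OF assms(1)]
  by (auto simp: flux_x_def intro!: divide_nonneg_pos)

lemma flux_x_nonpos:
  assumes "\<And>k. k < Nx \<Longrightarrow> xf k < xf (k + 1)"
    and "1 < i \<Longrightarrow> i \<le> Nx \<Longrightarrow> c i j * exp (S i j) \<le> c (i - 1) j * exp (S (i - 1) j)"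
  shows "flux_x Nx xf c S (i - 1) j \<le> 0"
  using assms dual_w_pos[where N = Nx and f = xf and i = "i - 1", OF assms(1)]
  by (auto simp: flux_x_def intro!: divide_nonpos_pos)

lemma flux_y_nonneg:
  assumes "\<And>k. k < Ny \<Longrightarrow> yf k < yf (k + 1)"
    and "1 \<le> j \<Longrightarrow> j < Ny \<Longrightarrow> c i j * exp (S i j) \<le> c i (j + 1) * exp (S i (j + 1))"
  shows "0 \<le> flux_y Ny yf c S i j"
  using assms dual_w_pos[where N = Ny and f = yf and i = j, OF assms(1)]
  by (auto simp: flux_y_def intro!: divide_nonneg_pos)

lemma flux_y_nonpos:
  assumes "\<And>k. k < Ny \<Longrightarrow> yf k < yf (k + 1)"
    and "1 < j \<Longrightarrow> j \<le> Ny \<Longrightarrow> c i j * exp (S i j) \<le> c i (j - 1) * exp (S i (j - 1))"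
  shows "flux_y Ny yf c S i (j - 1) \<le> 0"
  using assms dual_w_pos[where N = Ny and f = yf and i = "j - 1", OF assms(1)]
  by (auto simp: flux_y_def intro!: divide_nonpos_pos)

lemma Qop_nonneg_at_min:
  assumes xf: "\<And>k. k < Nx \<Longrightarrow> xf k < xf (k + 1)"
    and yf: "\<And>k. k < Ny \<Longrightarrow> yf k < yf (k + 1)"
    and i0: "1 \<le> i0" "i0 \<le> Nx" and j0: "1 \<le> j0" "j0 \<le> Ny"
    and minimal: "\<And>i j. 1 \<le> i \<Longrightarrow> i \<le> Nx \<Longrightarrow> 1 \<le> j \<Longrightarrow> j \<le> Ny \<Longrightarrow>
               c i0 j0 * exp (S i0 j0) \<le> c i j * exp (S i j)"
  shows "0 \<le> Qop Nx Ny xf yf c S i0 j0"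
proof -
  have right: "0 \<le> flux_x Nx xf c S i0 j0"
    using i0 j0 by (intro flux_x_nonneg[where Nx = Nx and xf = xf, OF xf] minimal) auto
  have left: "flux_x Nx xf c S (i0 - 1) j0 \<le> 0"
    using i0 j0 by (intro flux_x_nonpos[where Nx = Nx and xf = xf, OF xf] minimal) auto
  have up: "0 \<le> flux_y Ny yf c S i0 j0"
    using i0 j0 by (intro flux_y_nonneg[where Ny = Ny and yf = yf, OF yf] minimal) auto
  have down: "flux_y Ny yf c S i0 (j0 - 1) \<le> 0"
    using i0 j0 by (intro flux_y_nonpos[where Ny = Ny and yf = yf, OF yf] minimal) auto
  have "0 \<le> hm_x S i0 j0 * flux_x Nx xf c S i0 j0
             - hm_x S (i0 - 1) j0 * flux_x Nx xf c S (i0 - 1) j0"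
    using mult_nonneg_nonneg[OF less_imp_le[OF hm_x_pos[of S i0 j0]] right]
      mult_nonneg_nonpos[OF less_imp_le[OF hm_x_pos[of S "i0 - 1" j0]] left] by linarith
  moreover have "0 \<le> hm_y S i0 j0 * flux_y Ny yf c S i0 j0
                      - hm_y S i0 (j0 - 1) * flux_y Ny yf c S i0 (j0 - 1)"
    using mult_nonneg_nonneg[OF less_imp_le[OF hm_y_pos[of S i0 j0]] up]
      mult_nonneg_nonpos[OF less_imp_le[OF hm_y_pos[of S i0 "j0 - 1"]] down] by linarith
  moreover have "0 < cell_w xf i0" "0 < cell_w yf j0"
    using cell_w_pos[where N = Nx and f = xf, OF xf] cell_w_pos[where N = Ny and f = yf, OF yf]
      i0 j0 by auto
  ultimately show ?thesis
    unfolding Qop_def by (intro add_nonneg_nonneg mult_nonneg_nonneg) auto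
qed

theorem theorem3:
  fixes Nx Ny :: nat and xf yf :: "nat \<Rightarrow> real"
    and q dt :: real and psi cn cn1 :: "nat \<Rightarrow> nat \<Rightarrow> real"
  assumes "Nx \<ge> 1" and "Ny \<ge> 1"
    and "\<And>k. k < Nx \<Longrightarrow> xf k < xf (k + 1)"
    and "\<And>k. k < Ny \<Longrightarrow> yf k < yf (k + 1)"
    and "dt > 0"
    and "\<And>i j. 1 \<le> i \<Longrightarrow> i \<le> Nx \<Longrightarrow> 1 \<le> j \<Longrightarrow> j \<le> Ny \<Longrightarrow> cn i j > 0"
    and "\<And>i j. 1 \<le> i \<Longrightarrow> i \<le> Nx \<Longrightarrow> 1 \<le> j \<Longrightarrow> j \<le> Ny \<Longrightarrow>
           cell_w xf i * cell_w yf j * (cn1 i j - cn i j) / dt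
             = Qop Nx Ny xf yf cn1 (\<lambda>i j. q * psi i j) i j"
  shows "\<forall>i j. 1 \<le> i \<and> i \<le> Nx \<and> 1 \<le> j \<and> j \<le> Ny \<longrightarrow> cn1 i j > 0"
proof -
  define u where "u = (\<lambda>(i, j). cn1 i j * exp (q * psi i j))"
  obtain i0 j0 where p0: "(i0, j0) \<in> {1..Nx} \<times> {1..Ny}"
    and u_min: "\<And>p. p \<in> {1..Nx} \<times> {1..Ny} \<Longrightarrow> u (i0, j0) \<le> u p"
    using ex_is_arg_min_if_finite[of "{1..Nx} \<times> {1..Ny}" u] assms(1,2)
    by (fastforce simp: is_arg_min_linorder)
  have Q: "0 \<le> Qop Nx Ny xf yf cn1 (\<lambda>i j. q * psi i j) i0 j0"
    using p0 u_min[unfolded u_def] by (intro Qop_nonneg_at_min assms(3,4)) auto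
  have "0 < cell_w xf i0 * cell_w yf j0"
    using p0 cell_w_pos[where N = Nx and f = xf, OF assms(3)]
      cell_w_pos[where N = Ny and f = yf, OF assms(4)] by simp
  moreover have "0 \<le> cell_w xf i0 * cell_w yf j0 * (cn1 i0 j0 - cn i0 j0) / dt"
    using Q assms(7)[of i0 j0] p0 by simp
  ultimately have "cn i0 j0 \<le> cn1 i0 j0"
    using assms(5) by (simp add: zero_le_divide_iff zero_le_mult_iff)
  with assms(6)[of i0 j0] p0 have "0 < u (i0, j0)"
    by (simp add: u_def)
  with u_min have "0 < u (i, j)" if "(i, j) \<in> {1..Nx} \<times> {1..Ny}" for i j
    using that by fastforce
  then show ?thesis
    by (simp add: u_def zero_less_mult_iff)
qed

end
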